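(* Let $\nu$ be a weight satisfying property (U), let $\mu$ be an arbitrary weight and let $g\in H(\mathbb{D})$. If $$\sup_{0\leq t<1}\ \sup_{0\leq\theta<2\pi}\mu(t)\int_0^t\frac{|g(re^{i\theta})|}{(1-r^2)\nu(r)}\,dr<+\infty\,,$$ then $S_g: H^{\infty}_\nu\rightarrow H^{\infty}_\mu$ is bounded.
   Context: $\mathbb{D}$ is the open unit disk and $H(\mathbb{D})$ the space of analytic functions on $\mathbb{D}$. A weight is a non-negative continuous function $\nu$ on $\mathbb{D}$ with $\nu(z)=\nu(|z|)$ for all $z$, which is decreasing in $|z|$; we write $\nu(r)$ for its value at $|z|=r$. For a weight $\nu$, $H^{\infty}_\nu=\{f\in H(\mathbb{D}): \sup_{z\in\mathbb{D}}\nu(z)|f(z)|<\infty\}$. A weight $\nu$ satisfies property (U) if there is $\alpha>0$ such that $r\mapsto \nu(r)/(1-r^2)^\alpha$ is almost increasing on $[0,1)$ (i.e. there is $C>0$ with $h(r)\le C h(s)$ whenever $r\le s$), equivalently $\inf_n \nu(1-2^{-(n+1)})/\nu(1-2^{-n})>0$. For $g\in H(\mathbb{D})$, $(S_gf)(z)=\int_0^z f'(\omega)g(\omega)\,d\omega$. *)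

theory Defs
  imports "HOL-Complex_Analysis.Complex_Analysis"
begin

text \<open>A weight is represented by its radial profile on [0,1): nu(z) = nu (norm z).\<close>
definition is_weight :: "(real \<Rightarrow> real) \<Rightarrow> bool" where
  "is_weight \<nu> \<longleftrightarrow> (\<forall>r\<in>{0..<1}. 0 \<le> \<nu> r) \<and> continuous_on {0..<1} \<nu> \<and>
     (\<forall>r s. 0 \<le> r \<and> r \<le> s \<and> s < 1 \<longrightarrow> \<nu> s \<le> \<nu> r)"

definition almost_increasing_on :: "real set \<Rightarrow> (real \<Rightarrow> real) \<Rightarrow> bool" where
  "almost_increasing_on A h \<longleftrightarrow> (\<exists>C>0. \<forall>r\<in>A. \<forall>s\<in>A. r \<le> s \<longrightarrow> h r \<le> C * h s)"

definition property_U :: "(real \<Rightarrow> real) \<Rightarrow> bool" where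
  "property_U \<nu> \<longleftrightarrow> (\<exists>\<alpha>>0. almost_increasing_on {0..<1} (\<lambda>r. \<nu> r / (1 - r\<^sup>2) powr \<alpha>))"

definition Hinf :: "(real \<Rightarrow> real) \<Rightarrow> (complex \<Rightarrow> complex) set" where
  "Hinf \<nu> = {f. f holomorphic_on ball 0 1 \<and>
     (\<exists>M. \<forall>z\<in>ball 0 1. \<nu> (norm z) * norm (f z) \<le> M)}"

definition Hinf_norm :: "(real \<Rightarrow> real) \<Rightarrow> (complex \<Rightarrow> complex) \<Rightarrow> real" where
  "Hinf_norm \<nu> f = (SUP z\<in>ball 0 1. \<nu> (norm z) * norm (f z))"

definition S_op :: "(complex \<Rightarrow> complex) \<Rightarrow> (complex \<Rightarrow> complex) \<Rightarrow> complex \<Rightarrow> complex" where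
  "S_op g f z = contour_integral (linepath 0 z) (\<lambda>w. deriv f w * g w)"

definition bounded_Sg :: "(complex \<Rightarrow> complex) \<Rightarrow> (real \<Rightarrow> real) \<Rightarrow> (real \<Rightarrow> real) \<Rightarrow> bool" where
  "bounded_Sg g \<nu> \<mu> \<longleftrightarrow> (\<exists>C. \<forall>f\<in>Hinf \<nu>. S_op g f \<in> Hinf \<mu> \<and>
      Hinf_norm \<mu> (S_op g f) \<le> C * Hinf_norm \<nu> f)"

end

theory Submission
  imports Defs
begin

text \<open>
  Property (U) makes \<open>\<nu>\<close> doubling, \<open>\<nu>(r) \<le> D \<nu>((1 + r)/2)\<close>, so the Cauchy estimate on the disc
  of radius \<open>(1 - |w|)/2\<close> about \<open>w\<close> gives \<open>|f'(w)| (1 - |w|\<^sup>2) \<nu>(|w|) \<le> D' \<parallel>f\<parallel>\<^sub>\<nu>\<close>.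
  Integrating \<open>(S\<^sub>g f)' = f' g\<close> along the radius from \<open>0\<close> to \<open>z = t e\<^sup>i\<^sup>\<theta>\<close> then bounds
  \<open>\<mu>(t) |S\<^sub>g f(z)|\<close> by \<open>D' \<parallel>f\<parallel>\<^sub>\<nu>\<close> times the quantity in the hypothesis.
  If \<open>\<nu>\<close> vanishes somewhere, property (U) forces \<open>\<nu> = 0\<close>; the integrand of the hypothesis is then
  \<open>\<infinity>\<close> wherever \<open>g \<noteq> 0\<close>, so \<open>g\<close> vanishes on every radius \<open>[0, t]\<close> with \<open>\<mu>(t) > 0\<close> and
  \<open>\<mu> |S\<^sub>g f| = 0\<close>.
\<close>

lemma contour_integral_linepath_has_field_derivative:
  assumes holh: "h holomorphic_on S" and S: "convex S" "open S" and "a \<in> S" "w \<in> S"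
  shows "((\<lambda>z. contour_integral (linepath a z) h) has_field_derivative h w) (at w)"
proof -
  have "((\<lambda>z. contour_integral (linepath a z) h) has_field_derivative h w) (at w within S)"
  proof (rule triangle_contour_integrals_convex_primitive)
    fix b c assume "b \<in> S" "c \<in> S"
    then have "path_image (linepath a b +++ linepath b c +++ linepath c a) \<subseteq> S"
      using S \<open>a \<in> S\<close> by (simp add: path_image_join closed_segment_subset)
    then have "(h has_contour_integral 0) (linepath a b +++ linepath b c +++ linepath c a)"
      by (intro Cauchy_theorem_convex_simple[OF holh \<open>convex S\<close>]) auto
    then show "contour_integral (linepath a b) h + contour_integral (linepath b c) h +
               contour_integral (linepath c a) h = 0"
      by (rule has_chain_integral_chain_integral3)
  qed (use assms holomorphic_on_imp_continuous_on in blast)+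
  then show ?thesis
    using at_within_open[OF \<open>w \<in> S\<close> \<open>open S\<close>] by simp
qed

lemma S_op_0 [simp]: "S_op g f 0 = 0"
  by (simp add: S_op_def)

lemma S_op_has_field_derivative:
  assumes "f holomorphic_on ball 0 1" "g holomorphic_on ball 0 1" "w \<in> ball 0 1"
  shows "(S_op g f has_field_derivative deriv f w * g w) (at w)"
proof -
  have "(\<lambda>w. deriv f w * g w) holomorphic_on ball 0 1"
    using assms by (intro holomorphic_intros holomorphic_deriv) auto
  then show ?thesis
    unfolding S_op_def[abs_def]
    using assms by (intro contour_integral_linepath_has_field_derivative) auto
qed

lemma S_op_holomorphic:
  assumes "f holomorphic_on ball 0 1" "g holomorphic_on ball 0 1"
  shows "S_op g f holomorphic_on ball 0 1"
  unfolding holomorphic_on_open[OF open_ball] using S_op_has_field_derivative[OF assms] by blast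

lemma S_op_has_integral_radial:
  assumes f: "f holomorphic_on ball 0 1" and g: "g holomorphic_on ball 0 1"
    and "norm e = 1" "0 \<le> s" "s < 1"
  shows "((\<lambda>r. deriv f (of_real r * e) * g (of_real r * e) * e) has_integral S_op g f (of_real s * e)) {0..s}"
proof -
  have "((\<lambda>r. S_op g f (of_real r * e)) has_vector_derivative
          deriv f (of_real r * e) * g (of_real r * e) * e) (at r within {0..s})"
    if "r \<in> {0..s}" for r
  proof -
    have "of_real r * e \<in> ball 0 1"
      using that assms by (simp add: norm_mult)
    then have "((\<lambda>x. S_op g f (x * e)) has_field_derivative
                 deriv f (of_real r * e) * g (of_real r * e) * e) (at (of_real r))"
      by (intro DERIV_chain2[OF S_op_has_field_derivative[OF f g]]) (auto intro!: derivative_eq_intros)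
    then show ?thesis
      by (rule has_vector_derivative_real_field)
  qed
  then have "((\<lambda>r. deriv f (of_real r * e) * g (of_real r * e) * e) has_integral
               S_op g f (of_real s * e) - S_op g f (of_real 0 * e)) {0..s}"
    by (intro fundamental_theorem_of_calculus) (use assms in auto)
  then show ?thesis
    by simp
qed

lemma Hinf_norm_upper:
  assumes "f \<in> Hinf \<nu>" "z \<in> ball 0 1"
  shows "\<nu> (norm z) * norm (f z) \<le> Hinf_norm \<nu> f"
  using assms unfolding Hinf_def Hinf_norm_def by (auto intro!: cSUP_upper bdd_aboveI2)

lemma Hinf_norm_nonneg:
  assumes "is_weight \<nu>" "f \<in> Hinf \<nu>"
  shows "0 \<le> Hinf_norm \<nu> f"
proof -
  have "0 \<le> \<nu> (norm (0::complex)) * norm (f 0)"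
    using assms(1) by (simp add: is_weight_def)
  also have "\<dots> \<le> Hinf_norm \<nu> f"
    using Hinf_norm_upper[OF assms(2), of 0] by simp
  finally show ?thesis .
qed

lemma bounded_SgI:
  assumes "g holomorphic_on ball 0 1"
    and "\<And>f z. f \<in> Hinf \<nu> \<Longrightarrow> z \<in> ball 0 1 \<Longrightarrow> \<mu> (norm z) * norm (S_op g f z) \<le> C * Hinf_norm \<nu> f"
  shows "bounded_Sg g \<nu> \<mu>"
  unfolding bounded_Sg_def
proof (intro exI[of _ C] ballI conjI)
  fix f assume f: "f \<in> Hinf \<nu>"
  then have "f holomorphic_on ball 0 1"
    by (simp add: Hinf_def)
  then show "S_op g f \<in> Hinf \<mu>"
    using assms f unfolding Hinf_def by (blast intro: S_op_holomorphic)
  show "Hinf_norm \<mu> (S_op g f) \<le> C * Hinf_norm \<nu> f"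
    unfolding Hinf_norm_def[of \<mu>] using assms(2) f by (intro cSUP_least) auto
qed

lemma property_U_doubling:
  assumes "is_weight \<nu>" "property_U \<nu>"
  obtains D where "D > 0" "\<And>r. r \<in> {0..<1} \<Longrightarrow> \<nu> r \<le> D * \<nu> ((1 + r) / 2)"
proof -
  obtain \<alpha> C where "\<alpha> > 0" "C > 0" and U: "\<And>r s. r \<in> {0..<1} \<Longrightarrow> s \<in> {0..<1} \<Longrightarrow> r \<le> s \<Longrightarrow>
      \<nu> r / (1 - r\<^sup>2) powr \<alpha> \<le> C * (\<nu> s / (1 - s\<^sup>2) powr \<alpha>)"
    using assms(2) unfolding property_U_def almost_increasing_on_def by blast
  have "\<nu> r \<le> C * 4 powr \<alpha> * \<nu> ((1 + r) / 2)" if r: "r \<in> {0..<1}" for r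
  proof -
    define s where "s = (1 + r) / 2"
    have s: "s \<in> {0..<1}" "r \<le> s"
      using r by (auto simp: s_def)
    have pos: "0 < 1 - r\<^sup>2" "0 < 1 - s\<^sup>2"
      using r s by (auto simp: abs_square_less_1)
    have "1 - r\<^sup>2 \<le> 4 * (1 - s\<^sup>2)"
      using r by (simp add: s_def power2_eq_square field_simps)
    then have ratio: "(1 - r\<^sup>2) / (1 - s\<^sup>2) \<le> 4"
      using pos by (simp add: divide_le_eq)
    have "\<nu> r = (1 - r\<^sup>2) powr \<alpha> * (\<nu> r / (1 - r\<^sup>2) powr \<alpha>)"
      using pos by simp
    also have "\<dots> \<le> (1 - r\<^sup>2) powr \<alpha> * (C * (\<nu> s / (1 - s\<^sup>2) powr \<alpha>))"
      using U[OF r s] by (intro mult_left_mono) auto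
    also have "\<dots> = C * \<nu> s * ((1 - r\<^sup>2) / (1 - s\<^sup>2)) powr \<alpha>"
      using pos by (simp add: powr_divide)
    also have "\<dots> \<le> C * \<nu> s * 4 powr \<alpha>"
      using ratio pos s \<open>\<alpha> > 0\<close> \<open>C > 0\<close> assms(1)
      by (intro mult_left_mono powr_mono2) (auto simp: is_weight_def)
    finally show ?thesis
      by (simp add: s_def mult_ac)
  qed
  with \<open>C > 0\<close> show ?thesis
    by (intro that[of "C * 4 powr \<alpha>"]) auto
qed

lemma property_U_weight_vanishing:
  assumes "is_weight \<nu>" "property_U \<nu>" "r0 \<in> {0..<1}" "\<nu> r0 = 0" "r \<in> {0..<1}"
  shows "\<nu> r = 0"
proof -
  obtain \<alpha> C where U: "\<And>r s. r \<in> {0..<1} \<Longrightarrow> s \<in> {0..<1} \<Longrightarrow> r \<le> s \<Longrightarrow>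
      \<nu> r / (1 - r\<^sup>2) powr \<alpha> \<le> C * (\<nu> s / (1 - s\<^sup>2) powr \<alpha>)"
    using assms(2) unfolding property_U_def almost_increasing_on_def by blast
  have "\<nu> 0 \<le> 0"
    using U[of 0 r0] assms(3,4) by simp
  moreover have "0 \<le> \<nu> r" "\<nu> r \<le> \<nu> 0"
    using assms(1,5) unfolding is_weight_def by auto
  ultimately show ?thesis
    by simp
qed

lemma weight_denominator_pos:
  fixes \<nu> :: "real \<Rightarrow> real"
  assumes "\<forall>r\<in>{0..<1}. 0 < \<nu> r" "0 \<le> r" "r < 1"
  shows "0 < (1 - r\<^sup>2) * \<nu> r"
proof -
  have "r\<^sup>2 < 1"
    using power_strict_mono[of r 1 2] assms(2,3) by simp
  then show ?thesis
    using assms by simp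
qed

lemma norm_deriv_le_Hinf_norm:
  assumes "is_weight \<nu>" "f \<in> Hinf \<nu>" "z \<in> ball 0 1" "0 < \<nu> ((1 + norm z) / 2)"
  shows "norm (deriv f z) * (1 - norm z) * \<nu> ((1 + norm z) / 2) \<le> 2 * Hinf_norm \<nu> f"
proof -
  define \<rho> where "\<rho> = (1 - norm z) / 2"
  define s where "s = (1 + norm z) / 2"
  have "\<rho> > 0" "s < 1"
    using assms(3) by (auto simp: \<rho>_def s_def)
  have cball: "cball z \<rho> \<subseteq> ball 0 1"
  proof
    fix x assume "x \<in> cball z \<rho>"
    then have "norm x \<le> norm z + \<rho>"
      using norm_triangle_ineq2[of x z] by (simp add: dist_norm norm_minus_commute)
    then show "x \<in> ball 0 1"
      using assms(3) by (simp add: \<rho>_def field_simps)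
  qed
  have hol: "f holomorphic_on ball 0 1"
    using assms(2) by (simp add: Hinf_def)
  have "norm (f x) \<le> Hinf_norm \<nu> f / \<nu> s" if "norm (z - x) = \<rho>" for x
  proof -
    have x: "x \<in> ball 0 1"
      using that cball by (auto simp: dist_norm)
    have "norm x \<le> s"
      using that norm_triangle_ineq2[of x z] by (simp add: s_def \<rho>_def norm_minus_commute)
    then have "\<nu> s * norm (f x) \<le> \<nu> (norm x) * norm (f x)"
      using assms(1) \<open>s < 1\<close> by (intro mult_right_mono) (auto simp: is_weight_def)
    also have "\<dots> \<le> Hinf_norm \<nu> f"
      using Hinf_norm_upper[OF assms(2) x] .
    finally show ?thesis
      using assms(4) by (simp add: s_def field_simps)
  qed
  then have "norm ((deriv ^^ 1) f z) \<le> fact 1 * (Hinf_norm \<nu> f / \<nu> s) / \<rho> ^ 1"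
    using cball hol \<open>\<rho> > 0\<close> ball_subset_cball
    by (intro Cauchy_inequality holomorphic_on_subset[OF hol] continuous_on_subset[OF holomorphic_on_imp_continuous_on[OF hol]])
       auto
  then show ?thesis
    using assms(4) \<open>\<rho> > 0\<close> by (simp add: \<rho>_def s_def field_simps)
qed

lemma Hinf_weighted_deriv_bound:
  assumes "is_weight \<nu>" "property_U \<nu>" "\<forall>r\<in>{0..<1}. 0 < \<nu> r"
  obtains D where "D \<ge> 0"
    "\<And>f w. f \<in> Hinf \<nu> \<Longrightarrow> w \<in> ball 0 1 \<Longrightarrow>
       norm (deriv f w) * ((1 - (norm w)\<^sup>2) * \<nu> (norm w)) \<le> D * Hinf_norm \<nu> f"
proof -
  obtain D where "D > 0" and doubling: "\<And>r. r \<in> {0..<1} \<Longrightarrow> \<nu> r \<le> D * \<nu> ((1 + r) / 2)"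
    using property_U_doubling[OF assms(1,2)] by blast
  have "norm (deriv f w) * ((1 - (norm w)\<^sup>2) * \<nu> (norm w)) \<le> 4 * D * Hinf_norm \<nu> f"
    if f: "f \<in> Hinf \<nu>" and w: "w \<in> ball 0 1" for f w
  proof -
    define s where "s = (1 + norm w) / 2"
    have "s \<in> {0..<1}" "0 < \<nu> (norm w)"
      using w assms(3) by (auto simp: s_def)
    have "1 - (norm w)\<^sup>2 = (1 - norm w) * (1 + norm w)"
      by (simp add: power2_eq_square algebra_simps)
    also have "\<dots> \<le> (1 - norm w) * 2"
      using w by (intro mult_left_mono) auto
    finally have "1 - (norm w)\<^sup>2 \<le> 2 * (1 - norm w)"
      by simp
    then have "norm (deriv f w) * ((1 - (norm w)\<^sup>2) * \<nu> (norm w))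
          \<le> norm (deriv f w) * ((2 * (1 - norm w)) * (D * \<nu> s))"
      using doubling[of "norm w"] w \<open>0 < \<nu> (norm w)\<close> by (intro mult_left_mono mult_mono) (auto simp: s_def)
    also have "\<dots> = 2 * D * (norm (deriv f w) * (1 - norm w) * \<nu> s)"
      by (simp add: algebra_simps)
    also have "\<dots> \<le> 2 * D * (2 * Hinf_norm \<nu> f)"
      using norm_deriv_le_Hinf_norm[OF assms(1) f w] assms(3) \<open>s \<in> {0..<1}\<close> \<open>D > 0\<close>
      by (intro mult_left_mono) (auto simp: s_def)
    finally show ?thesis
      by simp
  qed
  with \<open>D > 0\<close> show ?thesis
    by (intro that[of "4 * D"]) auto
qed

lemma complex_polar_Arg2pi: "z = of_real (norm z) * cis (Arg2pi z)"
  using Arg2pi_eq[of z] by (simp add: cis_conv_exp)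

definition radial_integral :: "(real \<Rightarrow> real) \<Rightarrow> (complex \<Rightarrow> complex) \<Rightarrow> real \<Rightarrow> real \<Rightarrow> ennreal" where
  "radial_integral \<nu> g \<theta> t =
     (\<integral>\<^sup>+ r\<in>{0..t}. ennreal (norm (g (complex_of_real r * cis \<theta>))) / ennreal ((1 - r\<^sup>2) * \<nu> r) \<partial>lborel)"

lemma continuous_on_ray:
  assumes "g holomorphic_on ball 0 1" "norm e = 1" "t < 1"
  shows "continuous_on {0..t} (\<lambda>r. g (of_real r * e))"
  using assms(2,3)
  by (intro continuous_on_compose2[OF holomorphic_on_imp_continuous_on[OF assms(1)]])
     (auto intro!: continuous_intros simp: norm_mult)

lemma continuous_on_radial_integrand:
  assumes "is_weight \<nu>" "\<forall>r\<in>{0..<1}. 0 < \<nu> r" "g holomorphic_on ball 0 1"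
    and "norm e = 1" "t < 1"
  shows "continuous_on {0..t} (\<lambda>r. norm (g (of_real r * e)) / ((1 - r\<^sup>2) * \<nu> r))"
proof -
  have "continuous_on {0..t} (\<lambda>r. g (of_real r * e))"
    using continuous_on_ray[OF assms(3-5)] .
  moreover have "continuous_on {0..t} \<nu>"
    using assms(1,5) by (auto simp: is_weight_def intro: continuous_on_subset)
  moreover have "(1 - r\<^sup>2) * \<nu> r \<noteq> 0" if "r \<in> {0..t}" for r
    using weight_denominator_pos[OF assms(2)] that assms(5) by fastforce
  ultimately show ?thesis
    by (auto intro!: continuous_intros)
qed

lemma nn_integral_continuous_eq_integral:
  fixes \<phi> :: "real \<Rightarrow> real"
  assumes "continuous_on {a..b} \<phi>" "\<And>x. x \<in> {a..b} \<Longrightarrow> 0 \<le> \<phi> x"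
  shows "(\<integral>\<^sup>+ x\<in>{a..b}. ennreal (\<phi> x) \<partial>lborel) = ennreal (integral {a..b} \<phi>)"
  using assms by (intro nn_integral_has_integral_lebesgue' integrable_integral integrable_continuous_interval)

lemma radial_integral_eq_integral:
  assumes "is_weight \<nu>" "\<forall>r\<in>{0..<1}. 0 < \<nu> r" "g holomorphic_on ball 0 1" "t < 1"
  shows "radial_integral \<nu> g \<theta> t =
           ennreal (integral {0..t} (\<lambda>r. norm (g (of_real r * cis \<theta>)) / ((1 - r\<^sup>2) * \<nu> r)))"
proof -
  have "radial_integral \<nu> g \<theta> t =
          (\<integral>\<^sup>+ r\<in>{0..t}. ennreal (norm (g (of_real r * cis \<theta>)) / ((1 - r\<^sup>2) * \<nu> r)) \<partial>lborel)"
    unfolding radial_integral_def using weight_denominator_pos[OF assms(2)] assms(4)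
    by (intro set_nn_integral_cong) (auto simp: divide_ennreal)
  also have "\<dots> = ennreal (integral {0..t} (\<lambda>r. norm (g (of_real r * cis \<theta>)) / ((1 - r\<^sup>2) * \<nu> r)))"
    using weight_denominator_pos[OF assms(2)] assms
    by (intro nn_integral_continuous_eq_integral continuous_on_radial_integrand) (auto simp: less_imp_le)
  finally show ?thesis .
qed

lemma norm_S_op_le_radial_integral:
  assumes "is_weight \<nu>" "\<forall>r\<in>{0..<1}. 0 < \<nu> r"
    and f: "f holomorphic_on ball 0 1" and g: "g holomorphic_on ball 0 1"
    and B: "\<And>w. w \<in> ball 0 1 \<Longrightarrow> norm (deriv f w) * ((1 - (norm w)\<^sup>2) * \<nu> (norm w)) \<le> B"
    and "norm e = 1" "0 \<le> s" "s < 1"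
  shows "norm (S_op g f (of_real s * e)) \<le>
           B * integral {0..s} (\<lambda>r. norm (g (of_real r * e)) / ((1 - r\<^sup>2) * \<nu> r))"
proof -
  let ?\<phi> = "\<lambda>r. norm (g (of_real r * e)) / ((1 - r\<^sup>2) * \<nu> r)"
  have \<phi>: "?\<phi> integrable_on {0..s}"
    using assms by (intro integrable_continuous_interval continuous_on_radial_integrand)
  have "norm (deriv f (of_real r * e) * g (of_real r * e) * e) \<le> B * ?\<phi> r" if r: "r \<in> {0..s}" for r
  proof -
    have w: "of_real r * e \<in> ball 0 1" "norm (of_real r * e) = r"
      using r assms by (auto simp: norm_mult)
    have den: "0 < (1 - r\<^sup>2) * \<nu> r"
      using weight_denominator_pos[OF assms(2)] r assms(8) by auto
    have "norm (deriv f (of_real r * e)) \<le> B / ((1 - r\<^sup>2) * \<nu> r)"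
      using B[OF w(1)] den by (simp add: w(2) pos_le_divide_eq)
    then have "norm (deriv f (of_real r * e)) * norm (g (of_real r * e)) \<le> B / ((1 - r\<^sup>2) * \<nu> r) * norm (g (of_real r * e))"
      by (rule mult_right_mono) simp
    then show ?thesis
      using \<open>norm e = 1\<close> by (simp add: norm_mult)
  qed
  moreover note radial = S_op_has_integral_radial[OF f g assms(6-8)]
  ultimately have "norm (integral {0..s} (\<lambda>r. deriv f (of_real r * e) * g (of_real r * e) * e))
                     \<le> integral {0..s} (\<lambda>r. B * ?\<phi> r)"
    using integrable_cmul[OF \<phi>, of B]
    by (intro integral_norm_bound_integral has_integral_integrable[OF radial]) auto
  then have "norm (S_op g f (of_real s * e)) \<le> integral {0..s} (\<lambda>r. B * ?\<phi> r)"
    unfolding integral_unique[OF radial] .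
  then show ?thesis
    by (simp only: integral_mult[OF \<phi>])
qed

lemma continuous_vanishes_if_nn_integral_divide_zero_finite:
  fixes \<phi> :: "real \<Rightarrow> 'a::real_normed_vector"
  assumes cont: "continuous_on {a..b} \<phi>" and "a < b"
    and fin: "(\<integral>\<^sup>+ x\<in>{a..b}. ennreal (norm (\<phi> x)) / 0 \<partial>lborel) < \<infinity>"
    and x: "x \<in> {a..b}"
  shows "\<phi> x = 0"
proof (rule ccontr)
  assume "\<phi> x \<noteq> 0"
  then have "\<exists>\<delta>>0. \<forall>y\<in>{a..b}. dist y x < \<delta> \<longrightarrow> dist (\<phi> y) (\<phi> x) < norm (\<phi> x)"
    using cont x unfolding continuous_on_iff by simp
  then obtain \<delta> where "\<delta> > 0" and \<delta>: "\<And>y. y \<in> {a..b} \<Longrightarrow> dist y x < \<delta> \<Longrightarrow> \<phi> y \<noteq> 0"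
    by (fastforce simp: dist_norm)
  define c where "c = max a (x - \<delta>/2)"
  define d where "d = min b (x + \<delta>/2)"
  have "c < d" "{c..d} \<subseteq> {a..b}"
    using x \<open>a < b\<close> \<open>\<delta> > 0\<close> by (auto simp: c_def d_def)
  have "\<phi> y \<noteq> 0" if "y \<in> {c..d}" for y
    using that \<open>{c..d} \<subseteq> {a..b}\<close> \<open>\<delta> > 0\<close> by (intro \<delta>) (auto simp: c_def d_def dist_real_def)
  then have "(\<integral>\<^sup>+ y. \<infinity> * indicator {c..d} y \<partial>lborel) \<le> (\<integral>\<^sup>+ y\<in>{a..b}. ennreal (norm (\<phi> y)) / 0 \<partial>lborel)"
    using \<open>{c..d} \<subseteq> {a..b}\<close> by (intro nn_integral_mono) (auto split: split_indicator)
  moreover have "(\<integral>\<^sup>+ y. \<infinity> * indicator {c..d} y \<partial>lborel) = \<infinity>"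
    using \<open>c < d\<close> by (subst nn_integral_cmult_indicator) (auto simp: ennreal_top_mult)
  ultimately show False
    using fin by (simp add: top_unique)
qed

lemma bounded_Sg_if_weight_positive:
  assumes \<nu>: "is_weight \<nu>" "property_U \<nu>" "\<forall>r\<in>{0..<1}. 0 < \<nu> r"
    and \<mu>: "is_weight \<mu>" and g: "g holomorphic_on ball 0 1" and "0 \<le> K"
    and K: "\<And>t \<theta>. t \<in> {0..<1} \<Longrightarrow> \<theta> \<in> {0..<2*pi} \<Longrightarrow>
              ennreal (\<mu> t) * radial_integral \<nu> g \<theta> t \<le> ennreal K"
  shows "bounded_Sg g \<nu> \<mu>"
proof -
  obtain D where "D \<ge> 0" and D: "\<And>f w. f \<in> Hinf \<nu> \<Longrightarrow> w \<in> ball 0 1 \<Longrightarrow>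
       norm (deriv f w) * ((1 - (norm w)\<^sup>2) * \<nu> (norm w)) \<le> D * Hinf_norm \<nu> f"
    using Hinf_weighted_deriv_bound[OF \<nu>] by blast
  show ?thesis
  proof (rule bounded_SgI[OF g, of _ _ "D * K"])
    fix f and z :: complex
    assume f: "f \<in> Hinf \<nu>" and z: "z \<in> ball 0 1"
    define t where "t = norm z"
    define \<theta> where "\<theta> = Arg2pi z"
    define I where "I = integral {0..t} (\<lambda>r. norm (g (of_real r * cis \<theta>)) / ((1 - r\<^sup>2) * \<nu> r))"
    have t: "t \<in> {0..<1}" and \<theta>: "\<theta> \<in> {0..<2*pi}"
      using z Arg2pi[of z] by (auto simp: t_def \<theta>_def)
    have z_polar: "z = of_real t * cis \<theta>"
      unfolding t_def \<theta>_def by (rule complex_polar_Arg2pi)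
    have N: "0 \<le> Hinf_norm \<nu> f"
      using Hinf_norm_nonneg[OF \<nu>(1) f] .
    have S: "norm (S_op g f z) \<le> D * Hinf_norm \<nu> f * I"
      using f t unfolding z_polar I_def
      by (intro norm_S_op_le_radial_integral[OF \<nu>(1,3) _ g D[OF f]]) (auto simp: Hinf_def)
    have "ennreal (\<mu> t * I) \<le> ennreal K"
      using K[OF t \<theta>] radial_integral_eq_integral[OF \<nu>(1,3) g, of t \<theta>] t \<mu>
      by (simp add: I_def ennreal_mult' is_weight_def)
    then have "\<mu> t * I \<le> K"
      using \<open>0 \<le> K\<close> by simp
    have "\<mu> t * norm (S_op g f z) \<le> \<mu> t * (D * Hinf_norm \<nu> f * I)"
      using S t \<mu> by (intro mult_left_mono) (auto simp: is_weight_def)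
    also have "\<dots> = D * Hinf_norm \<nu> f * (\<mu> t * I)"
      by (simp add: algebra_simps)
    also have "\<dots> \<le> D * Hinf_norm \<nu> f * K"
      using \<open>\<mu> t * I \<le> K\<close> \<open>D \<ge> 0\<close> N by (intro mult_left_mono) auto
    finally show "\<mu> (norm z) * norm (S_op g f z) \<le> D * K * Hinf_norm \<nu> f"
      by (simp add: t_def algebra_simps)
  qed
qed

lemma bounded_Sg_if_weight_vanishes:
  assumes \<nu>: "is_weight \<nu>" "property_U \<nu>" "r0 \<in> {0..<1}" "\<nu> r0 = 0"
    and \<mu>: "is_weight \<mu>" and g: "g holomorphic_on ball 0 1"
    and fin: "\<And>t \<theta>. t \<in> {0..<1} \<Longrightarrow> \<theta> \<in> {0..<2*pi} \<Longrightarrow>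
              ennreal (\<mu> t) * radial_integral \<nu> g \<theta> t < \<infinity>"
  shows "bounded_Sg g \<nu> \<mu>"
proof (rule bounded_SgI[OF g, of _ _ 0])
  fix f and z :: complex
  assume f: "f \<in> Hinf \<nu>" and z: "z \<in> ball 0 1"
  define t where "t = norm z"
  define \<theta> where "\<theta> = Arg2pi z"
  have t: "t \<in> {0..<1}" and \<theta>: "\<theta> \<in> {0..<2*pi}"
    using z Arg2pi[of z] by (auto simp: t_def \<theta>_def)
  have z_polar: "z = of_real t * cis \<theta>"
    unfolding t_def \<theta>_def by (rule complex_polar_Arg2pi)
  show "\<mu> (norm z) * norm (S_op g f z) \<le> 0 * Hinf_norm \<nu> f"
  proof (cases "0 < t \<and> 0 < \<mu> t")
    case True
    have "radial_integral \<nu> g \<theta> t = (\<integral>\<^sup>+ r\<in>{0..t}. ennreal (norm (g (of_real r * cis \<theta>))) / 0 \<partial>lborel)"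
      unfolding radial_integral_def using property_U_weight_vanishing[OF \<nu>] t
      by (intro set_nn_integral_cong) auto
    moreover have "radial_integral \<nu> g \<theta> t < \<infinity>"
      using fin[OF t \<theta>] True by (auto simp: ennreal_mult_less_top)
    ultimately have vanish: "g (of_real r * cis \<theta>) = 0" if "r \<in> {0..t}" for r
      using True t that continuous_on_ray[OF g, of "cis \<theta>" t]
      by (intro continuous_vanishes_if_nn_integral_divide_zero_finite[where a = 0 and b = t]) auto
    have radial: "((\<lambda>r. deriv f (of_real r * cis \<theta>) * g (of_real r * cis \<theta>) * cis \<theta>)
                      has_integral S_op g f z) {0..t}"
      using S_op_has_integral_radial[OF _ g, of f "cis \<theta>" t] f t z_polar by (simp add: Hinf_def)
    have "((\<lambda>r. 0) has_integral S_op g f z) {0..t}"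
      by (rule has_integral_eq[OF _ radial]) (simp add: vanish)
    then show ?thesis
      by simp
  next
    case False
    moreover have "0 \<le> \<mu> t"
      using t \<mu> by (simp add: is_weight_def)
    ultimately have "z = 0 \<or> \<mu> t = 0"
      by (auto simp: t_def)
    then show ?thesis
      by (auto simp: t_def)
  qed
qed

theorem proposition1:
  fixes \<nu> \<mu> :: "real \<Rightarrow> real" and g :: "complex \<Rightarrow> complex"
  assumes "is_weight \<nu>" and "property_U \<nu>" and "is_weight \<mu>"
    and "g holomorphic_on ball 0 1"
    and "(SUP t\<in>{0..<1}. SUP \<theta>\<in>{0..<2*pi}.
           ennreal (\<mu> t) * (\<integral>\<^sup>+ r\<in>{0..t}.
              ennreal (norm (g (complex_of_real r * cis \<theta>))) / ennreal ((1 - r\<^sup>2) * \<nu> r) \<partial>lborel)) < \<infinity>"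
  shows "bounded_Sg g \<nu> \<mu>"
proof -
  define Q where "Q = (SUP t\<in>{0..<1}. SUP \<theta>\<in>{0..<2*pi}. ennreal (\<mu> t) * radial_integral \<nu> g \<theta> t)"
  have "Q < \<infinity>"
    using assms(5) unfolding Q_def radial_integral_def .
  have le_Q: "ennreal (\<mu> t) * radial_integral \<nu> g \<theta> t \<le> Q"
    if "t \<in> {0..<1}" "\<theta> \<in> {0..<2*pi}" for t \<theta>
    unfolding Q_def using that by (intro SUP_upper2[of t] SUP_upper) auto
  show ?thesis
  proof (cases "\<forall>r\<in>{0..<1}. 0 < \<nu> r")
    case True
    have "ennreal (\<mu> t) * radial_integral \<nu> g \<theta> t \<le> ennreal (enn2real Q)"
      if "t \<in> {0..<1}" "\<theta> \<in> {0..<2*pi}" for t \<theta>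
      using le_Q[OF that] \<open>Q < \<infinity>\<close> by simp
    then show ?thesis
      by (rule bounded_Sg_if_weight_positive[OF assms(1,2) True assms(3,4) enn2real_nonneg])
  next
    case False
    then obtain r0 where "r0 \<in> {0..<1}" "\<nu> r0 = 0"
      using assms(1) unfolding is_weight_def by force
    moreover have "ennreal (\<mu> t) * radial_integral \<nu> g \<theta> t < \<infinity>"
      if "t \<in> {0..<1}" "\<theta> \<in> {0..<2*pi}" for t \<theta>
      using le_Q[OF that] \<open>Q < \<infinity>\<close> by (rule le_less_trans)
    ultimately show ?thesis
      using bounded_Sg_if_weight_vanishes assms(1-4) by blast
  qed
qed

end
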